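(* Let $R\subset S$ be an FCP ring extension with Loewy series $\{S_i\}_{i=0}^n$, and let $T\in[R,S]$, $T\neq R,S$, be such that $\mathrm{Supp}_R(T/R)\cap\mathrm{Supp}_R(S/T)=\emptyset$. Then: (1) $T$ has a unique complement $U\in[R,S]$, i.e. a unique $U$ with $T\cap U=R$ and $TU=S$. (2) Let $\{T_i\}_{i=0}^m$ and $\{U_i\}_{i=0}^r$ be the Loewy series of $R\subseteq T$ and $R\subseteq U$ respectively. Then $S_i=T_iU_i$ for each $i\in\{0,\ldots,n\}$, and $n=\pounds[R,S]=\sup(\pounds[R,T],\pounds[R,U])=\sup(m,r)$.
   Context: All rings are commutative with identity. $[R,S]$ is the lattice of $R$-subalgebras of $S$ (meet = intersection, join = product). FCP: every chain in $[R,S]$ is finite. $T\subset U$ minimal means $[T,U]=\{T,U\}$; atoms of $[A,B]$ are $C$ with $A\subset C$ minimal; the socle $\mathcal S[A,B]$ is the product of all atoms of $[A,B]$. The Loewy series of $A\subseteq B$: $S_0=A$, $S_{i+1}=\mathcal S[S_i,B]$ while $S_i\neq B$, and $\pounds[A,B]$ is the least $n$ with $S_n=B$; by convention the terms of a Loewy series beyond its length are all equal to its top (e.g. $T_i=T$ for $i\geq m$ and $U_i=U$ for $i\geq r$). $\mathrm{Supp}_R(E)$ is the set of primes $P$ of $R$ with $E_P\neq 0$. *)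

theory Defs
  imports Main
begin

text \<open>Rings are subsets of an ambient commutative ring (type class comm_ring_1).
  A ring extension R \<subseteq> S is a pair of subrings of the ambient type.\<close>

definition subring :: "'a::comm_ring_1 set \<Rightarrow> bool" where
  "subring A \<longleftrightarrow> 0 \<in> A \<and> 1 \<in> A \<and> (\<forall>x\<in>A. \<forall>y\<in>A. x + y \<in> A \<and> x * y \<in> A) \<and> (\<forall>x\<in>A. - x \<in> A)"

definition interval :: "'a::comm_ring_1 set \<Rightarrow> 'a set \<Rightarrow> 'a set set" where
  "interval A B = {C. subring C \<and> A \<subseteq> C \<and> C \<subseteq> B}"

definition ring_gen :: "'a::comm_ring_1 set \<Rightarrow> 'a set" where
  "ring_gen X = \<Inter>{C. subring C \<and> X \<subseteq> C}"

definition ringprod :: "'a::comm_ring_1 set \<Rightarrow> 'a set \<Rightarrow> 'a set" where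
  "ringprod A B = ring_gen (A \<union> B)"

definition FCP :: "'a::comm_ring_1 set \<Rightarrow> 'a set \<Rightarrow> bool" where
  "FCP A B \<longleftrightarrow> (\<forall>C \<subseteq> interval A B. (\<forall>x\<in>C. \<forall>y\<in>C. x \<subseteq> y \<or> y \<subseteq> x) \<longrightarrow> finite C)"

definition minimal_ext :: "'a::comm_ring_1 set \<Rightarrow> 'a set \<Rightarrow> bool" where
  "minimal_ext A B \<longleftrightarrow> A \<subset> B \<and> interval A B = {A, B}"

definition atoms :: "'a::comm_ring_1 set \<Rightarrow> 'a set \<Rightarrow> 'a set set" where
  "atoms A B = {C \<in> interval A B. minimal_ext A C}"

definition socle :: "'a::comm_ring_1 set \<Rightarrow> 'a set \<Rightarrow> 'a set" where
  "socle A B = ring_gen (A \<union> \<Union>(atoms A B))"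

text \<open>Loewy series; terms beyond the length are equal to the top.\<close>
fun loewy :: "'a::comm_ring_1 set \<Rightarrow> 'a set \<Rightarrow> nat \<Rightarrow> 'a set" where
  "loewy A B 0 = A"
| "loewy A B (Suc i) = (if loewy A B i = B then B else socle (loewy A B i) B)"

definition loewy_length :: "'a::comm_ring_1 set \<Rightarrow> 'a set \<Rightarrow> nat" where
  "loewy_length A B = (LEAST n. loewy A B n = B)"

definition prime_ideal_of :: "'a::comm_ring_1 set \<Rightarrow> 'a set \<Rightarrow> bool" where
  "prime_ideal_of R P \<longleftrightarrow> P \<subseteq> R \<and> P \<noteq> R \<and> 0 \<in> P
     \<and> (\<forall>x\<in>P. \<forall>y\<in>P. x + y \<in> P) \<and> (\<forall>r\<in>R. \<forall>x\<in>P. r * x \<in> P)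
     \<and> (\<forall>a\<in>R. \<forall>b\<in>R. a * b \<in> P \<longrightarrow> a \<in> P \<or> b \<in> P)"

text \<open>Supp_R(M/N) for R-submodules N \<subseteq> M of the ambient ring:
  (M/N)_P \<noteq> 0 iff some class x+N does not vanish in the localization,
  i.e. no s \<in> R - P has s*x \<in> N.\<close>
definition supp_quot :: "'a::comm_ring_1 set \<Rightarrow> 'a set \<Rightarrow> 'a set \<Rightarrow> 'a set set" where
  "supp_quot R M N = {P. prime_ideal_of R P \<and> (\<exists>x\<in>M. \<forall>s\<in>R - P. s * x \<notin> N)}"

end

(*
  T/R and S/T are finitely generated (FCP), so their supports are closed in Spec R; being
  disjoint, they are separated by a partition of unity: a + b = 1 in R with (T/R)_a = 0
  and (S/T)_b = 0.  Then U = {u \<in> S. b^n u \<in> R for some n} is a complement of T, and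
  for any complement U both R \<subseteq> T and R \<subseteq> U are trivial over the complementary
  opens D(a), D(b).  Consequently C \<mapsto> (C \<inter> T, C \<inter> U) is a lattice isomorphism
  [R,S] \<cong> [R,T] \<times> [R,U] with inverse (A, B) \<mapsto> AB.  It identifies atoms, hence socles,
  hence the Loewy series of R \<subseteq> S with the products of those of R \<subseteq> T and R \<subseteq> U;
  uniqueness of U follows from U = (U \<inter> T)(U \<inter> U') = U \<inter> U' for two complements.
*)

theory Submission
  imports Defs "HOL-Library.Set_Algebras"
begin

lemma subring_zero: "subring C \<Longrightarrow> 0 \<in> C"
  and subring_one: "subring C \<Longrightarrow> 1 \<in> C"
  and subring_add: "subring C \<Longrightarrow> x \<in> C \<Longrightarrow> y \<in> C \<Longrightarrow> x + y \<in> C"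
  and subring_mult: "subring C \<Longrightarrow> x \<in> C \<Longrightarrow> y \<in> C \<Longrightarrow> x * y \<in> C"
  and subring_uminus: "subring C \<Longrightarrow> x \<in> C \<Longrightarrow> - x \<in> C"
  by (simp_all add: subring_def)

lemma subring_power: "subring C \<Longrightarrow> x \<in> C \<Longrightarrow> x ^ n \<in> C"
  by (induction n) (auto intro: subring_one subring_mult)

lemma subring_Int: "subring A \<Longrightarrow> subring B \<Longrightarrow> subring (A \<inter> B)"
  by (simp add: subring_def)

lemma mem_interval_iff: "C \<in> interval A B \<longleftrightarrow> subring C \<and> A \<subseteq> C \<and> C \<subseteq> B"
  by (simp add: interval_def)

lemma subring_ring_gen: "subring (ring_gen X)"
  unfolding ring_gen_def subring_def by auto

lemma ring_gen_upper: "X \<subseteq> ring_gen X"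
  unfolding ring_gen_def by auto

lemma ring_gen_least: "subring C \<Longrightarrow> X \<subseteq> C \<Longrightarrow> ring_gen X \<subseteq> C"
  unfolding ring_gen_def by auto

lemma ring_gen_mono: "X \<subseteq> Y \<Longrightarrow> ring_gen X \<subseteq> ring_gen Y"
  unfolding ring_gen_def by auto

lemma ring_gen_subring: "subring C \<Longrightarrow> ring_gen C = C"
  by (meson ring_gen_least ring_gen_upper subset_antisym subset_refl)

lemma subring_ringprod: "subring (ringprod A B)"
  by (simp add: ringprod_def subring_ring_gen)

lemma ringprod_upper1: "A \<subseteq> ringprod A B"
  and ringprod_upper2: "B \<subseteq> ringprod A B"
  unfolding ringprod_def using ring_gen_upper by blast+

lemma ringprod_least: "subring C \<Longrightarrow> A \<subseteq> C \<Longrightarrow> B \<subseteq> C \<Longrightarrow> ringprod A B \<subseteq> C"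
  unfolding ringprod_def by (simp add: ring_gen_least)

lemma ringprod_mono: "A \<subseteq> A' \<Longrightarrow> B \<subseteq> B' \<Longrightarrow> ringprod A B \<subseteq> ringprod A' B'"
  unfolding ringprod_def by (rule ring_gen_mono) blast

lemma ringprod_commute: "ringprod A B = ringprod B A"
  unfolding ringprod_def by (simp add: Un_commute)

lemma ringprod_absorb1: "subring B \<Longrightarrow> A \<subseteq> B \<Longrightarrow> ringprod A B = B"
  by (simp add: ringprod_def Un_absorb1 ring_gen_subring)

lemma ringprod_interval:
  "A \<in> interval R S \<Longrightarrow> B \<in> interval R S \<Longrightarrow> subring S \<Longrightarrow> ringprod A B \<in> interval R S"
  using ringprod_upper1[of A B] ringprod_least[of S A B] subring_ringprod[of A B]
  by (auto simp: mem_interval_iff)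

section \<open>Ideals and Krull's theorem\<close>

definition ideal_of :: "'a::comm_ring_1 set \<Rightarrow> 'a set \<Rightarrow> bool" where
  "ideal_of R I \<longleftrightarrow> I \<subseteq> R \<and> 0 \<in> I \<and> (\<forall>x\<in>I. \<forall>y\<in>I. x + y \<in> I) \<and> (\<forall>r\<in>R. \<forall>x\<in>I. r * x \<in> I)"

lemma prime_ideal_of_iff:
  "prime_ideal_of R P \<longleftrightarrow> ideal_of R P \<and> P \<noteq> R \<and> (\<forall>a\<in>R. \<forall>b\<in>R. a * b \<in> P \<longrightarrow> a \<in> P \<or> b \<in> P)"
  unfolding prime_ideal_of_def ideal_of_def by blast

lemma ideal_of_sum:
  assumes R: "subring R" and I: "ideal_of R I" and J: "ideal_of R J"
  shows "ideal_of R (I + J)"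
  unfolding ideal_of_def
proof (intro conjI ballI)
  show "I + J \<subseteq> R"
    using I J by (auto simp: ideal_of_def elim!: set_plus_elim intro: subring_add[OF R])
  show "0 \<in> I + J"
    using I J set_plus_intro[of 0 I 0 J] by (simp add: ideal_of_def)
next
  fix x y assume "x \<in> I + J" "y \<in> I + J"
  then obtain i j i' j' where "x = i + j" "y = i' + j'" "i \<in> I" "j \<in> J" "i' \<in> I" "j' \<in> J"
    by (auto elim!: set_plus_elim)
  moreover have "i + i' \<in> I" "j + j' \<in> J"
    using I J calculation by (simp_all add: ideal_of_def)
  moreover have "i + j + (i' + j') = (i + i') + (j + j')"
    by (simp add: algebra_simps)
  ultimately show "x + y \<in> I + J"
    by (metis set_plus_intro)
next
  fix r x assume "r \<in> R" "x \<in> I + J"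
  then obtain i j where "x = i + j" "i \<in> I" "j \<in> J"
    by (auto elim!: set_plus_elim)
  then show "r * x \<in> I + J"
    using I J \<open>r \<in> R\<close> by (auto simp: ideal_of_def distrib_left)
qed

lemma ideal_of_elt_set_times: "subring R \<Longrightarrow> c \<in> R \<Longrightarrow> ideal_of R (c *o R)"
proof -
  assume R: "subring R" and c: "c \<in> R"
  have "c * x + c * y = c * (x + y)" "r * (c * x) = c * (r * x)" for x y r
    by (simp_all add: algebra_simps)
  with R c show ?thesis
    unfolding ideal_of_def elt_set_times_def
    by (fastforce intro: bexI[of _ 0] subring_zero subring_add subring_mult)
qed

lemma ideal_of_Union_chain:
  assumes "C \<noteq> {}" "chain\<^sub>\<subseteq> C" "\<forall>J\<in>C. ideal_of R J"
  shows "ideal_of R (\<Union>C)"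
  unfolding ideal_of_def
proof (intro conjI ballI)
  fix x y assume "x \<in> \<Union>C" "y \<in> \<Union>C"
  then obtain J J' where "J \<in> C" "J' \<in> C" "x \<in> J" "y \<in> J'" by blast
  with assms(2,3) show "x + y \<in> \<Union>C"
    unfolding chain_subset_def ideal_of_def by (metis UnionI subsetD)
next
  fix r x assume "r \<in> R" "x \<in> \<Union>C"
  with assms(3) show "r * x \<in> \<Union>C"
    unfolding ideal_of_def by blast
qed (use assms in \<open>auto simp: ideal_of_def\<close>)

lemma maximal_ideal_of_prime:
  assumes R: "subring R" and M: "ideal_of R M" "1 \<notin> M"
    and maximal: "\<And>J. ideal_of R J \<Longrightarrow> M \<subseteq> J \<Longrightarrow> 1 \<notin> J \<Longrightarrow> J = M"
  shows "prime_ideal_of R M"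
proof -
  have comaximal: "\<exists>p\<in>M. \<exists>r\<in>R. p + c * r = 1" if c: "c \<in> R" "c \<notin> M" for c
  proof -
    have "ideal_of R (M + c *o R)"
      by (intro ideal_of_sum R M(1) ideal_of_elt_set_times c(1))
    moreover have "M \<subseteq> M + c *o R"
    proof -
      have "0 \<in> c *o R"
        using R by (auto simp: elt_set_times_def intro: bexI[of _ 0] subring_zero)
      then show ?thesis
        using set_zero_plus2 add.commute by metis
    qed
    moreover have "c \<in> M + c *o R"
    proof -
      have "0 \<in> M" "c \<in> c *o R"
        using M(1) R by (auto simp: ideal_of_def elt_set_times_def intro: bexI[of _ 1] subring_one)
      then show ?thesis
        using set_plus_intro[of 0 M c "c *o R"] by simp
    qed
    ultimately have "1 \<in> M + c *o R"
      using maximal[of "M + c *o R"] c(2) by blast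
    then obtain p x where "1 = p + x" "p \<in> M" "x \<in> c *o R"
      by (rule set_plus_elim)
    then show ?thesis
      unfolding elt_set_times_def by auto
  qed
  have "a \<in> M \<or> b \<in> M" if ab: "a \<in> R" "b \<in> R" "a * b \<in> M" for a b
  proof (rule ccontr)
    assume "\<not> (a \<in> M \<or> b \<in> M)"
    then obtain p q r s where pq: "p \<in> M" "q \<in> M" "r \<in> R" "s \<in> R" "p + a * r = 1" "q + b * s = 1"
      using comaximal ab by meson
    have "1 = (p + a * r) * (q + b * s)"
      using pq by simp
    also have "\<dots> = (q + b * s) * p + (a * r) * q + (r * s) * (a * b)"
      by (simp add: algebra_simps)
    also have "\<dots> \<in> M"
    proof -
      have "q + b * s \<in> R" "a * r \<in> R" "r * s \<in> R"
        using M(1) R ab pq by (auto simp: ideal_of_def intro: subring_add subring_mult subring_one)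
      then show ?thesis
        using M(1) ab pq by (simp add: ideal_of_def)
    qed
    finally show False
      using M(2) by blast
  qed
  moreover have "M \<noteq> R"
    using M(2) subring_one[OF R] by blast
  ultimately show ?thesis
    using M(1) by (simp add: prime_ideal_of_iff)
qed

theorem ideal_of_subset_prime:
  assumes R: "subring R" and I: "ideal_of R I" "1 \<notin> I"
  shows "\<exists>P. prime_ideal_of R P \<and> I \<subseteq> P"
proof -
  define F where "F = {J. ideal_of R J \<and> I \<subseteq> J \<and> 1 \<notin> J}"
  have "\<exists>U\<in>F. \<forall>J\<in>C. J \<subseteq> U" if C: "C \<in> chains F" for C
  proof (cases "C = {}")
    case True
    then show ?thesis
      using I by (auto simp: F_def)
  next
    case False
    have "C \<subseteq> F" "chain\<^sub>\<subseteq> C"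
      using C by (simp_all add: chains_def)
    then have "ideal_of R (\<Union>C)" "I \<subseteq> \<Union>C" "1 \<notin> \<Union>C"
      using ideal_of_Union_chain[OF False] False unfolding F_def by blast+
    then show ?thesis
      unfolding F_def by blast
  qed
  then obtain M where M: "M \<in> F" and maximal: "\<forall>J\<in>F. M \<subseteq> J \<longrightarrow> J = M"
    using Zorn_Lemma2[of F] by blast
  have "prime_ideal_of R M"
  proof (rule maximal_ideal_of_prime[OF R])
    show "ideal_of R M" "1 \<notin> M"
      using M by (simp_all add: F_def)
    show "J = M" if "ideal_of R J" "M \<subseteq> J" "1 \<notin> J" for J
      using maximal that M unfolding F_def by blast
  qed
  then show ?thesis
    using \<open>M \<in> F\<close> by (auto simp: F_def)
qed

lemma ideal_of_INT:
  "subring R \<Longrightarrow> (\<And>y. y \<in> Y \<Longrightarrow> ideal_of R (J y)) \<Longrightarrow> ideal_of R (R \<inter> (\<Inter>y\<in>Y. J y))"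
  unfolding ideal_of_def by (auto simp: subring_zero intro: subring_add subring_mult)

lemma comaximal_Int:
  assumes R: "subring R" and I: "ideal_of R I" and J: "ideal_of R J" and J': "ideal_of R J'"
    and "1 \<in> I + J" "1 \<in> I + J'"
  shows "1 \<in> I + (J \<inter> J')"
proof -
  obtain i j i' j' where ij: "1 = i + j" "i \<in> I" "j \<in> J" and ij': "1 = i' + j'" "i' \<in> I" "j' \<in> J'"
    using assms(5,6) by (auto elim!: set_plus_elim)
  have "1 = (i + j) * (i' + j')"
    using ij ij' by simp
  also have "\<dots> = ((i' + j') * i + j * i') + j * j'"
    by (simp add: algebra_simps)
  also have "\<dots> \<in> I + (J \<inter> J')"
  proof (rule set_plus_intro)
    have "i' + j' \<in> R" "j \<in> R" "j' \<in> R"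
      using I J J' ij ij' by (auto simp: ideal_of_def intro: subring_one[OF R])
    then show "(i' + j') * i + j * i' \<in> I" "j * j' \<in> J \<inter> J'"
      using I J J' ij ij' by (auto simp: ideal_of_def mult.commute[of j])
  qed
  finally show ?thesis .
qed

lemma comaximal_INT:
  assumes "finite Y" and R: "subring R" and I: "ideal_of R I"
    and J: "\<And>y. y \<in> Y \<Longrightarrow> ideal_of R (J y)" "\<And>y. y \<in> Y \<Longrightarrow> 1 \<in> I + J y"
  shows "1 \<in> I + (R \<inter> (\<Inter>y\<in>Y. J y))"
  using assms(1) J
proof (induction Y rule: finite_induct)
  case empty
  show ?case
    using set_plus_intro[of 0 I 1 R] I subring_one[OF R] by (simp add: ideal_of_def)
next
  case (insert y Y)
  have "R \<inter> (\<Inter>z\<in>insert y Y. J z) = J y \<inter> (R \<inter> (\<Inter>z\<in>Y. J z))"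
    using insert.prems(1)[of y] by (auto simp: ideal_of_def)
  moreover have "1 \<in> I + J y \<inter> (R \<inter> (\<Inter>z\<in>Y. J z))"
    by (rule comaximal_Int[OF R I]) (use insert in \<open>auto intro: ideal_of_INT[OF R]\<close>)
  ultimately show ?case
    by simp
qed

section \<open>Colon ideals and supports\<close>

definition colon :: "'a::comm_ring_1 set \<Rightarrow> 'a set \<Rightarrow> 'a \<Rightarrow> 'a set" where
  "colon R C x = {r \<in> R. r * x \<in> C}"

lemma ideal_of_colon:
  assumes R: "subring R" and C: "subring C" and "R \<subseteq> C"
  shows "ideal_of R (colon R C x)"
proof -
  have "(r + s) * x = r * x + s * x" "(r * s) * x = r * (s * x)" for r s
    by (simp_all add: algebra_simps)
  with assms show ?thesis
    unfolding ideal_of_def colon_def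
    by (auto simp: mult.assoc intro: subring_zero subring_add subring_mult)
qed

lemma mem_supp_quot_iff:
  "P \<in> supp_quot R M N \<longleftrightarrow> prime_ideal_of R P \<and> (\<exists>x\<in>M. colon R N x \<subseteq> P)"
  unfolding supp_quot_def colon_def by blast

lemma supp_quot_disjoint_colon_comaximal:
  assumes R: "subring R" and T: "subring T" and RT: "R \<subseteq> T"
    and disjoint: "supp_quot R T R \<inter> supp_quot R S T = {}"
    and x: "x \<in> T" and y: "y \<in> S"
  shows "1 \<in> colon R R x + colon R T y"
proof (rule ccontr)
  assume "1 \<notin> colon R R x + colon R T y"
  moreover have "ideal_of R (colon R R x)" "ideal_of R (colon R T y)"
    using R T RT by (simp_all add: ideal_of_colon)
  ultimately obtain P where P: "prime_ideal_of R P" "colon R R x + colon R T y \<subseteq> P"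
    using ideal_of_subset_prime[OF R] ideal_of_sum[OF R] by blast
  have "colon R T y \<subseteq> colon R R x + colon R T y" "colon R R x \<subseteq> colon R T y + colon R R x"
    using \<open>ideal_of R (colon R R x)\<close> \<open>ideal_of R (colon R T y)\<close>
    by (simp_all add: set_zero_plus2 ideal_of_def)
  then have "P \<in> supp_quot R T R" "P \<in> supp_quot R S T"
    using P x y by (auto simp: mem_supp_quot_iff add.commute)
  with disjoint show False
    by blast
qed

lemma supp_quot_disjoint_comaximal_elements:
  assumes R: "subring R" and T: "subring T" and RT: "R \<subseteq> T"
    and disjoint: "supp_quot R T R \<inter> supp_quot R S T = {}"
    and X: "finite X" "X \<subseteq> T" and Y: "finite Y" "Y \<subseteq> S"
  shows "\<exists>a\<in>R. \<exists>b\<in>R. a + b = 1 \<and> (\<forall>x\<in>X. a * x \<in> R) \<and> (\<forall>y\<in>Y. b * y \<in> T)"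
proof -
  define IX where "IX = R \<inter> (\<Inter>x\<in>X. colon R R x)"
  define JY where "JY = R \<inter> (\<Inter>y\<in>Y. colon R T y)"
  have ideals: "ideal_of R (colon R R x)" "ideal_of R (colon R T y)" for x y
    using R T RT by (simp_all add: ideal_of_colon)
  have JY: "ideal_of R JY"
    unfolding JY_def by (rule ideal_of_INT[OF R ideals(2)])
  have "1 \<in> colon R R x + JY" if "x \<in> X" for x
    unfolding JY_def using that X Y
    by (intro comaximal_INT[OF Y(1) R ideals(1) ideals(2)] supp_quot_disjoint_colon_comaximal[OF R T RT disjoint]) auto
  then have "1 \<in> JY + IX"
    unfolding IX_def using comaximal_INT[OF X(1) R JY ideals(1)] by (simp add: add.commute)
  then obtain b a where "1 = b + a" "b \<in> JY" "a \<in> IX"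
    by (rule set_plus_elim)
  then show ?thesis
    unfolding IX_def JY_def colon_def by (auto simp: add.commute)
qed

section \<open>Saturation with respect to powers\<close>

text \<open>\<open>pow_saturation C c\<close> consists of the elements that lie in \<open>C\<close> once \<open>c\<close> is inverted;
  so \<open>M \<subseteq> pow_saturation N c\<close> says \<open>(M/N)\<^sub>c = 0\<close>.\<close>

definition pow_saturation :: "'a::comm_ring_1 set \<Rightarrow> 'a \<Rightarrow> 'a set" where
  "pow_saturation C c = {w. \<exists>n. c ^ n * w \<in> C}"

lemma subset_pow_saturation: "C \<subseteq> pow_saturation C c"
  unfolding pow_saturation_def by (auto intro: exI[of _ 0])

lemma mem_pow_saturationI: "c ^ n * x \<in> C \<Longrightarrow> x \<in> pow_saturation C c"
  unfolding pow_saturation_def by blast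

lemma pow_saturation_mono: "C \<subseteq> D \<Longrightarrow> pow_saturation C c \<subseteq> pow_saturation D c"
  unfolding pow_saturation_def by blast

lemma subring_pow_saturation:
  assumes C: "subring C" and c: "c \<in> C"
  shows "subring (pow_saturation C c)"
  unfolding subring_def
proof (intro conjI ballI)
  show "0 \<in> pow_saturation C c" "1 \<in> pow_saturation C c"
    using subset_pow_saturation[of C c] C by (auto intro: subring_zero subring_one)
next
  fix x y assume "x \<in> pow_saturation C c" "y \<in> pow_saturation C c"
  then obtain m n where x: "c ^ m * x \<in> C" and y: "c ^ n * y \<in> C"
    unfolding pow_saturation_def by blast
  have "c ^ (m + n) * (x + y) = c ^ n * (c ^ m * x) + c ^ m * (c ^ n * y)"
    "c ^ (m + n) * (x * y) = (c ^ m * x) * (c ^ n * y)"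
    by (simp_all add: power_add algebra_simps)
  then have "c ^ (m + n) * (x + y) \<in> C" "c ^ (m + n) * (x * y) \<in> C"
    using C c x y by (simp_all add: subring_add subring_mult subring_power)
  then show "x + y \<in> pow_saturation C c" "x * y \<in> pow_saturation C c"
    unfolding pow_saturation_def by blast+
next
  fix x assume "x \<in> pow_saturation C c"
  then obtain m where "c ^ m * x \<in> C"
    unfolding pow_saturation_def by blast
  then have "c ^ m * (- x) \<in> C"
    using subring_uminus[OF C] by simp
  then show "- x \<in> pow_saturation C c"
    unfolding pow_saturation_def by blast
qed

lemma comaximal_power:
  assumes R: "subring R" and "p \<in> R" "q \<in> R" "p + q = 1"
  shows "\<exists>w\<in>R. p ^ m + q * w = 1"
proof (induction m)
  case 0
  show ?case
    using R by (auto intro: bexI[of _ 0] subring_zero)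
next
  case (Suc m)
  then obtain w where w: "w \<in> R" "p ^ m + q * w = 1"
    by blast
  have "p ^ Suc m + q * (1 + p * w) = p * (p ^ m + q * w) + q"
    by (simp add: algebra_simps)
  also have "\<dots> = 1"
    using w assms by simp
  finally show ?case
    using assms w by (meson subring_one subring_add subring_mult)
qed

lemma comaximal_powers:
  assumes R: "subring R" and ab: "a \<in> R" "b \<in> R" "a + b = 1"
  shows "\<exists>u\<in>R. \<exists>v\<in>R. u * a ^ m + v * b ^ n = 1"
proof -
  obtain w where w: "w \<in> R" "a ^ m + b * w = 1"
    using comaximal_power[OF assms] by blast
  then have "b * w \<in> R" "a ^ m \<in> R" "b * w + a ^ m = 1"
    using R ab by (auto simp: subring_mult subring_power add.commute)
  then obtain z where z: "z \<in> R" "(b * w) ^ n + a ^ m * z = 1"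
    using comaximal_power[OF R] by blast
  have "z * a ^ m + w ^ n * b ^ n = 1"
    using z(2) by (simp add: algebra_simps power_mult_distrib)
  then show ?thesis
    using z w R by (meson subring_power)
qed

lemma pow_saturation_Int_comaximal:
  assumes C: "subring C" and ab: "a \<in> C" "b \<in> C" "a + b = 1"
  shows "pow_saturation C a \<inter> pow_saturation C b = C"
proof (intro equalityI subsetI)
  fix w assume "w \<in> pow_saturation C a \<inter> pow_saturation C b"
  then obtain m n where mn: "a ^ m * w \<in> C" "b ^ n * w \<in> C"
    unfolding pow_saturation_def by blast
  obtain u v where uv: "u \<in> C" "v \<in> C" "u * a ^ m + v * b ^ n = 1"
    using comaximal_powers[OF assms] by blast
  have "w = u * (a ^ m * w) + v * (b ^ n * w)"
    by (metis uv(3) mult.assoc distrib_right mult_1)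
  also have "\<dots> \<in> C"
    using C mn uv by (simp add: subring_add subring_mult)
  finally show "w \<in> C" .
qed (use subset_pow_saturation in blast)

lemma Int_pow_saturation_subset:
  assumes "subring C" "b \<in> C"
  shows "C \<inter> pow_saturation T b \<subseteq> pow_saturation (C \<inter> T) b"
proof
  fix c assume "c \<in> C \<inter> pow_saturation T b"
  then obtain n where "c \<in> C" "b ^ n * c \<in> T"
    unfolding pow_saturation_def by blast
  moreover have "b ^ n * c \<in> C"
    using assms \<open>c \<in> C\<close> by (simp add: subring_mult subring_power)
  ultimately show "c \<in> pow_saturation (C \<inter> T) b"
    unfolding pow_saturation_def by blast
qed

section \<open>Finite chain property\<close>

lemma FCP_subinterval:
  assumes "FCP A B" "interval C D \<subseteq> interval A B"
  shows "FCP C D"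
  unfolding FCP_def
proof (intro allI impI)
  fix X assume "X \<subseteq> interval C D" "\<forall>x\<in>X. \<forall>y\<in>X. x \<subseteq> y \<or> y \<subseteq> x"
  with assms show "finite X"
    unfolding FCP_def by (meson subset_trans)
qed

lemma FCP_chain_seq_not_inj:
  fixes f :: "nat \<Rightarrow> 'a::comm_ring_1 set"
  assumes "FCP A B" "range f \<subseteq> interval A B" "\<And>i j. f i \<subseteq> f j \<or> f j \<subseteq> f i"
  shows "\<not> inj f"
proof
  assume "inj f"
  have "\<And>x y. x \<in> range f \<Longrightarrow> y \<in> range f \<Longrightarrow> x \<subseteq> y \<or> y \<subseteq> x"
    using assms(3) by auto
  then have "finite (range f)"
    using assms(1)[unfolded FCP_def, rule_format, OF assms(2)] by blast
  then show False
    using finite_imageD[OF _ \<open>inj f\<close>] by simp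
qed

lemma wf_FCP_psubset:
  assumes "FCP A B"
  shows "wf {(X, Y). X \<in> interval A B \<and> Y \<in> interval A B \<and> X \<subset> Y}"
  unfolding wf_iff_no_infinite_down_chain
proof
  assume "\<exists>f. \<forall>i. (f (Suc i), f i) \<in> {(X, Y). X \<in> interval A B \<and> Y \<in> interval A B \<and> X \<subset> Y}"
  then obtain f where "\<forall>i. (f (Suc i), f i) \<in> {(X, Y). X \<in> interval A B \<and> Y \<in> interval A B \<and> X \<subset> Y}"
    by blast
  then have f: "range f \<subseteq> interval A B" "\<And>i. f (Suc i) \<subset> f i"
    by auto
  have antimono: "f j \<subseteq> f i" if "i \<le> j" for i j
    using lift_Suc_antimono_le[of f] f(2) that by blast
  have "inj f"
  proof (rule linorder_injI)
    fix i j :: nat assume "i < j"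
    then show "f i \<noteq> f j"
      using antimono[of "Suc i" j] f(2)[of i] by auto
  qed
  moreover have "f i \<subseteq> f j \<or> f j \<subseteq> f i" for i j
    using antimono[of i j] antimono[of j i] nat_le_linear[of i j] by blast
  ultimately show False
    using FCP_chain_seq_not_inj[OF assms f(1)] by blast
qed

lemma wf_FCP_psupset:
  assumes "FCP A B"
  shows "wf {(X, Y). X \<in> interval A B \<and> Y \<in> interval A B \<and> Y \<subset> X}"
  unfolding wf_iff_no_infinite_down_chain
proof
  assume "\<exists>f. \<forall>i. (f (Suc i), f i) \<in> {(X, Y). X \<in> interval A B \<and> Y \<in> interval A B \<and> Y \<subset> X}"
  then obtain f where "\<forall>i. (f (Suc i), f i) \<in> {(X, Y). X \<in> interval A B \<and> Y \<in> interval A B \<and> Y \<subset> X}"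
    by blast
  then have f: "range f \<subseteq> interval A B" "\<And>i. f i \<subset> f (Suc i)"
    by auto
  then have "strict_mono f"
    by (simp add: strict_mono_Suc_iff)
  moreover have "f i \<subseteq> f j \<or> f j \<subseteq> f i" for i j
    using strict_mono_mono[OF \<open>strict_mono f\<close>, THEN monoD] nat_le_linear[of i j] by blast
  ultimately show False
    using FCP_chain_seq_not_inj[OF assms f(1)] strict_mono_on_imp_inj_on by blast
qed

lemma minimal_extI:
  assumes "X \<subset> C" "subring X" "subring C" "\<And>D. D \<in> interval X C \<Longrightarrow> D = X \<or> D = C"
  shows "minimal_ext X C"
proof -
  have "interval X C \<subseteq> {X, C}"
    using assms(4) by blast
  moreover have "{X, C} \<subseteq> interval X C"
    using assms(1-3) by (auto simp: mem_interval_iff)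
  ultimately show ?thesis
    using assms(1) unfolding minimal_ext_def by blast
qed

lemma atoms_nonempty:
  assumes "FCP A B" "subring B" "X \<in> interval A B" "X \<noteq> B"
  shows "atoms X B \<noteq> {}"
proof -
  define Q where "Q = {C \<in> interval A B. X \<subset> C}"
  have X: "subring X" "A \<subseteq> X" "X \<subseteq> B"
    using assms(3) by (simp_all add: mem_interval_iff)
  then have "B \<in> Q"
    using assms(2,4) by (auto simp: Q_def mem_interval_iff)
  then obtain C where C: "C \<in> Q"
    and least: "\<And>D. (D, C) \<in> {(X, Y). X \<in> interval A B \<and> Y \<in> interval A B \<and> X \<subset> Y} \<Longrightarrow> D \<notin> Q"
    using wfE_min[OF wf_FCP_psubset[OF assms(1)] \<open>B \<in> Q\<close>] by blast
  have C': "subring C" "X \<subset> C" "C \<subseteq> B"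
    using C by (simp_all add: Q_def mem_interval_iff)
  have "D = X \<or> D = C" if D: "D \<in> interval X C" for D
  proof (rule ccontr)
    assume "\<not> (D = X \<or> D = C)"
    moreover have "subring D" "X \<subseteq> D" "D \<subseteq> C"
      using D by (simp_all add: mem_interval_iff)
    ultimately have "D \<in> Q" "D \<in> interval A B" "D \<subset> C"
      using X C' by (auto simp: Q_def mem_interval_iff)
    then show False
      using least[of D] C by (simp add: Q_def)
  qed
  then have "minimal_ext X C"
    using minimal_extI[OF C'(2) X(1) C'(1)] by blast
  then have "C \<in> atoms X B"
    using C' X unfolding atoms_def by (simp add: mem_interval_iff)
  then show ?thesis
    by blast
qed

lemma FCP_finitely_generated:
  assumes "FCP A B" "subring B" "D \<in> interval A B" "C \<in> interval D B"
  shows "\<exists>X. finite X \<and> X \<subseteq> C \<and> ring_gen (D \<union> X) = C"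
proof -
  define Q where "Q = {ring_gen (D \<union> X) | X. finite X \<and> X \<subseteq> C}"
  have C: "subring C" "D \<subseteq> C" "C \<subseteq> B" and AD: "A \<subseteq> D"
    using assms(3,4) by (simp_all add: mem_interval_iff)
  have gen_le: "ring_gen (D \<union> X) \<subseteq> C" if "X \<subseteq> C" for X
    using that C by (intro ring_gen_least) auto
  have Q: "G \<in> interval A B" if G: "G \<in> Q" for G
  proof -
    obtain X where "G = ring_gen (D \<union> X)" "X \<subseteq> C"
      using G unfolding Q_def by blast
    then show ?thesis
      using gen_le[of X] ring_gen_upper[of "D \<union> X"] subring_ring_gen[of "D \<union> X"] AD C(3)
      by (auto simp: mem_interval_iff)
  qed
  have "ring_gen (D \<union> {}) \<in> Q"
    unfolding Q_def by blast
  then obtain G where "G \<in> Q"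
    and greatest: "\<And>H. (H, G) \<in> {(X, Y). X \<in> interval A B \<and> Y \<in> interval A B \<and> Y \<subset> X} \<Longrightarrow> H \<notin> Q"
    using wfE_min[OF wf_FCP_psupset[OF assms(1)] \<open>ring_gen (D \<union> {}) \<in> Q\<close>] by blast
  then obtain X where X: "G = ring_gen (D \<union> X)" "finite X" "X \<subseteq> C"
    unfolding Q_def by blast
  have "C \<subseteq> G"
  proof
    fix t assume "t \<in> C"
    define H where "H = ring_gen (D \<union> insert t X)"
    have "H \<in> Q"
      unfolding Q_def H_def using X \<open>t \<in> C\<close> by blast
    moreover have "G \<subseteq> H"
      unfolding X(1) H_def by (rule ring_gen_mono) blast
    moreover have "t \<in> H"
      unfolding H_def using ring_gen_upper[of "D \<union> insert t X"] by blast
    ultimately show "t \<in> G"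
      using greatest[of H] Q[OF \<open>H \<in> Q\<close>] Q[OF \<open>G \<in> Q\<close>] by blast
  qed
  then show ?thesis
    using X gen_le[of X] by blast
qed

section \<open>Socle and Loewy series\<close>

lemma socle_upper: "X \<subseteq> socle X B"
  unfolding socle_def using ring_gen_upper[of "X \<union> \<Union>(atoms X B)"] by blast

lemma atom_subset_socle: "C \<in> atoms X B \<Longrightarrow> C \<subseteq> socle X B"
  unfolding socle_def using ring_gen_upper[of "X \<union> \<Union>(atoms X B)"] by blast

lemma socle_least: "subring D \<Longrightarrow> X \<subseteq> D \<Longrightarrow> (\<And>C. C \<in> atoms X B \<Longrightarrow> C \<subseteq> D) \<Longrightarrow> socle X B \<subseteq> D"
  unfolding socle_def by (intro ring_gen_least) auto

lemma subring_socle: "subring (socle X B)"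
  by (simp add: socle_def subring_ring_gen)

lemma socle_interval:
  assumes "subring B" "X \<subseteq> B"
  shows "socle X B \<in> interval X B"
proof -
  have "socle X B \<subseteq> B"
    by (rule socle_least[OF assms]) (simp add: atoms_def mem_interval_iff)
  then show ?thesis
    using socle_upper[of X B] subring_socle[of X B] by (simp add: mem_interval_iff)
qed

lemma socle_self: "subring X \<Longrightarrow> socle X X = X"
  using socle_interval[of X X] by (simp add: mem_interval_iff subset_antisym)

lemma loewy_Suc_socle: "subring B \<Longrightarrow> loewy A B (Suc i) = socle (loewy A B i) B"
  by (simp add: socle_self)

lemma loewy_interval:
  assumes "subring A" "subring B" "A \<subseteq> B"
  shows "loewy A B i \<in> interval A B"
proof (induction i)
  case 0
  then show ?case
    using assms by (simp add: mem_interval_iff)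
next
  case (Suc i)
  then have "A \<subseteq> loewy A B i" "loewy A B i \<subseteq> B"
    by (simp_all add: mem_interval_iff)
  then have "socle (loewy A B i) B \<in> interval (loewy A B i) B"
    using socle_interval assms(2) by blast
  then show ?case
    unfolding loewy_Suc_socle[OF assms(2)] using \<open>A \<subseteq> loewy A B i\<close> by (auto simp: mem_interval_iff)
qed

lemma loewy_eq_top_mono:
  assumes "loewy A B k = B" "k \<le> l"
  shows "loewy A B l = B"
  using assms(2) by (induction l rule: dec_induct) (simp_all add: assms(1))

lemma FCP_loewy_reaches_top:
  assumes "FCP A B" "subring A" "subring B" "A \<subseteq> B"
  shows "\<exists>k. loewy A B k = B"
proof (rule ccontr)
  assume none: "\<nexists>k. loewy A B k = B"
  have "(loewy A B (Suc i), loewy A B i) \<in> {(X, Y). X \<in> interval A B \<and> Y \<in> interval A B \<and> Y \<subset> X}" for i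
  proof -
    have L: "loewy A B i \<in> interval A B" "loewy A B (Suc i) \<in> interval A B"
      by (rule loewy_interval[OF assms(2-4)])+
    obtain C where C: "C \<in> atoms (loewy A B i) B"
      using atoms_nonempty[OF assms(1,3) L(1)] none by blast
    then have "loewy A B i \<subset> C"
      by (simp add: atoms_def minimal_ext_def)
    moreover have "C \<subseteq> loewy A B (Suc i)"
      unfolding loewy_Suc_socle[OF assms(3)] by (rule atom_subset_socle[OF C])
    ultimately show ?thesis
      using L by blast
  qed
  then show False
    using wf_FCP_psupset[OF assms(1)] unfolding wf_iff_no_infinite_down_chain by blast
qed

lemma Least_conj_upward_closed:
  fixes P Q :: "nat \<Rightarrow> bool"
  assumes "P m" "Q n" "\<And>i j. P i \<Longrightarrow> i \<le> j \<Longrightarrow> P j" "\<And>i j. Q i \<Longrightarrow> i \<le> j \<Longrightarrow> Q j"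
  shows "(LEAST k. P k \<and> Q k) = max (LEAST k. P k) (LEAST k. Q k)"
proof (rule Least_equality)
  have "P (LEAST k. P k)" "Q (LEAST k. Q k)"
    using LeastI assms(1,2) by metis+
  then show "P (max (LEAST k. P k) (LEAST k. Q k)) \<and> Q (max (LEAST k. P k) (LEAST k. Q k))"
    using assms(3,4) max.cobounded1 max.cobounded2 by blast
qed (simp add: Least_le)

section \<open>Splitting an extension over complementary opens\<close>

locale comaximal_split =
  fixes R T U S :: "'a::comm_ring_1 set" and a b :: 'a
  assumes subring_R: "subring R" and subring_T: "subring T" and subring_U: "subring U"
    and R_subset_T: "R \<subseteq> T" and R_subset_U: "R \<subseteq> U"
    and a: "a \<in> R" and b: "b \<in> R" and comaximal: "a + b = 1"
    and T_saturated: "T \<subseteq> pow_saturation R a" and U_saturated: "U \<subseteq> pow_saturation R b"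
    and compositum: "ringprod T U = S"
begin

lemma swap: "comaximal_split R U T S b a"
  using comaximal_split_axioms ringprod_commute[of T U]
  by (simp add: comaximal_split_def add.commute)

lemma subring_S: "subring S"
  using compositum subring_ringprod by blast

lemma T_subset_S: "T \<subseteq> S" and U_subset_S: "U \<subseteq> S"
  using compositum ringprod_upper1 ringprod_upper2 by blast+

lemma S_subset_pow_saturation: "S \<subseteq> pow_saturation T b"
proof -
  have "U \<subseteq> pow_saturation T b"
    using U_saturated pow_saturation_mono[OF R_subset_T] by blast
  then show ?thesis
    unfolding compositum[symmetric]
    using subset_pow_saturation R_subset_T b
    by (intro ringprod_least subring_pow_saturation subring_T) auto
qed

lemma ringprod_Int_left:
  assumes A: "A \<in> interval R T" and B: "B \<in> interval R U"
  shows "ringprod A B \<inter> T = A"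
proof
  have sA: "subring A" and RA: "R \<subseteq> A" and AT: "A \<subseteq> T" and BU: "B \<subseteq> U"
    using A B by (simp_all add: mem_interval_iff)
  have "B \<subseteq> pow_saturation A b"
    using BU U_saturated pow_saturation_mono[OF RA] by blast
  moreover have "b \<in> A"
    using RA b by blast
  ultimately have "ringprod A B \<subseteq> pow_saturation A b"
    by (intro ringprod_least subring_pow_saturation[OF sA] subset_pow_saturation)
  moreover have "T \<subseteq> pow_saturation A a"
    using T_saturated pow_saturation_mono[OF RA] by blast
  ultimately show "ringprod A B \<inter> T \<subseteq> A"
    using pow_saturation_Int_comaximal[OF sA _ _ comaximal] a b RA by blast
  show "A \<subseteq> ringprod A B \<inter> T"
    using ringprod_upper1 AT by blast
qed

lemma ringprod_Int_right:
  assumes "A \<in> interval R T" "B \<in> interval R U"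
  shows "ringprod A B \<inter> U = B"
  using comaximal_split.ringprod_Int_left[OF swap assms(2,1)] by (simp add: ringprod_commute)

lemma ringprod_Int_Int:
  assumes C: "C \<in> interval R S"
  shows "ringprod (C \<inter> T) (C \<inter> U) = C"
proof
  have sC: "subring C" and RC: "R \<subseteq> C" and CS: "C \<subseteq> S"
    using C by (simp_all add: mem_interval_iff)
  show "ringprod (C \<inter> T) (C \<inter> U) \<subseteq> C"
    by (rule ringprod_least[OF sC]) auto
  define P where "P = ringprod (C \<inter> T) (C \<inter> U)"
  have "C \<subseteq> pow_saturation (C \<inter> T) b"
    using Int_pow_saturation_subset[OF sC, of b T] RC b CS S_subset_pow_saturation by blast
  moreover have "C \<subseteq> pow_saturation (C \<inter> U) a"
    using Int_pow_saturation_subset[OF sC, of a U] RC a CS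
      comaximal_split.S_subset_pow_saturation[OF swap] by blast
  moreover have "pow_saturation (C \<inter> T) b \<subseteq> pow_saturation P b"
    "pow_saturation (C \<inter> U) a \<subseteq> pow_saturation P a"
    unfolding P_def by (intro pow_saturation_mono ringprod_upper1 ringprod_upper2)+
  ultimately have "C \<subseteq> pow_saturation P b \<inter> pow_saturation P a"
    by blast
  moreover have "pow_saturation P a \<inter> pow_saturation P b = P"
    using a b RC R_subset_T ringprod_upper1[of "C \<inter> T" "C \<inter> U"] unfolding P_def
    by (intro pow_saturation_Int_comaximal subring_ringprod comaximal) blast+
  ultimately show "C \<subseteq> P"
    by blast
qed

lemma ringprod_subset_iff:
  assumes "A \<in> interval R T" "B \<in> interval R U" "A' \<in> interval R T" "B' \<in> interval R U"
  shows "ringprod A B \<subseteq> ringprod A' B' \<longleftrightarrow> A \<subseteq> A' \<and> B \<subseteq> B'"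
proof
  assume "ringprod A B \<subseteq> ringprod A' B'"
  then have "ringprod A B \<inter> T \<subseteq> ringprod A' B' \<inter> T" "ringprod A B \<inter> U \<subseteq> ringprod A' B' \<inter> U"
    by blast+
  then show "A \<subseteq> A' \<and> B \<subseteq> B'"
    using assms by (simp add: ringprod_Int_left ringprod_Int_right)
qed (simp add: ringprod_mono)

lemma ringprod_eq_iff:
  assumes "A \<in> interval R T" "B \<in> interval R U" "A' \<in> interval R T" "B' \<in> interval R U"
  shows "ringprod A B = ringprod A' B' \<longleftrightarrow> A = A' \<and> B = B'"
  using ringprod_subset_iff[OF assms] ringprod_subset_iff[OF assms(3,4,1,2)] by blast

lemma ringprod_mem_interval:
  "A \<in> interval R T \<Longrightarrow> B \<in> interval R U \<Longrightarrow> ringprod A B \<in> interval R S"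
  using T_subset_S U_subset_S subring_S
  by (intro ringprod_interval) (auto simp: mem_interval_iff)

lemma interval_ringprod_left:
  assumes A: "A \<in> interval R T" "A' \<in> interval R T" "A \<subseteq> A'" and B: "B \<in> interval R U"
  shows "interval (ringprod A B) (ringprod A' B) = (\<lambda>E. ringprod E B) ` interval A A'"
proof (intro equalityI subsetI)
  fix C assume C: "C \<in> interval (ringprod A B) (ringprod A' B)"
  then have "C \<in> interval R S"
    using ringprod_mem_interval[OF A(1) B] ringprod_mem_interval[OF A(2) B]
    by (auto simp: mem_interval_iff)
  have "ringprod A B \<inter> T \<subseteq> C \<inter> T" "C \<inter> T \<subseteq> ringprod A' B \<inter> T"
    "ringprod A B \<inter> U \<subseteq> C \<inter> U" "C \<inter> U \<subseteq> ringprod A' B \<inter> U"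
    using C by (auto simp: mem_interval_iff)
  then have "A \<subseteq> C \<inter> T" "C \<inter> T \<subseteq> A'" "B \<subseteq> C \<inter> U" "C \<inter> U \<subseteq> B"
    using A B by (simp_all only: ringprod_Int_left ringprod_Int_right)
  moreover have "subring (C \<inter> T)"
    using C subring_T by (simp add: mem_interval_iff subring_Int)
  ultimately have "C \<inter> T \<in> interval A A'" "C \<inter> U = B"
    by (auto simp: mem_interval_iff)
  then have "C \<inter> T \<in> interval A A'" "C = ringprod (C \<inter> T) B"
    using ringprod_Int_Int[OF \<open>C \<in> interval R S\<close>] by simp_all
  then show "C \<in> (\<lambda>E. ringprod E B) ` interval A A'"
    by blast
next
  fix C assume "C \<in> (\<lambda>E. ringprod E B) ` interval A A'"
  then obtain E where "C = ringprod E B" "subring E" "A \<subseteq> E" "E \<subseteq> A'"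
    by (auto simp: mem_interval_iff)
  then show "C \<in> interval (ringprod A B) (ringprod A' B)"
    using ringprod_mono[of A E B B] ringprod_mono[of E A' B B]
    by (simp add: mem_interval_iff subring_ringprod)
qed

lemma minimal_ext_ringprod_left_iff:
  assumes A: "A \<in> interval R T" "A' \<in> interval R T" "A \<subseteq> A'" and B: "B \<in> interval R U"
  shows "minimal_ext (ringprod A B) (ringprod A' B) \<longleftrightarrow> minimal_ext A A'"
proof -
  have "inj_on (\<lambda>E. ringprod E B) (interval R T)"
  proof (rule inj_onI)
    fix E E' assume "E \<in> interval R T" "E' \<in> interval R T" "ringprod E B = ringprod E' B"
    then show "E = E'"
      using ringprod_eq_iff[OF _ B _ B] by blast
  qed
  moreover have "interval A A' \<subseteq> interval R T" "{A, A'} \<subseteq> interval R T"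
    using A by (force simp: interval_def)+
  moreover have "{ringprod A B, ringprod A' B} = (\<lambda>E. ringprod E B) ` {A, A'}"
    by simp
  ultimately have interval_iff: "interval (ringprod A B) (ringprod A' B) = {ringprod A B, ringprod A' B}
      \<longleftrightarrow> interval A A' = {A, A'}"
    unfolding interval_ringprod_left[OF assms] by (simp only: inj_on_image_eq_iff)
  have psubset_iff: "ringprod A B \<subset> ringprod A' B \<longleftrightarrow> A \<subset> A'"
    by (simp add: psubset_eq ringprod_subset_iff[OF A(1) B A(2) B] ringprod_eq_iff[OF A(1) B A(2) B])
  show ?thesis
    unfolding minimal_ext_def interval_iff psubset_iff ..
qed

lemma minimal_ext_ringprod_right_iff:
  assumes "A \<in> interval R T" "B \<in> interval R U" "B' \<in> interval R U" "B \<subseteq> B'"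
  shows "minimal_ext (ringprod A B) (ringprod A B') \<longleftrightarrow> minimal_ext B B'"
  using comaximal_split.minimal_ext_ringprod_left_iff[OF swap assms(2-4,1)]
  by (simp add: ringprod_commute)

lemma ringprod_mem_atoms_left:
  assumes A: "A \<in> interval R T" and B: "B \<in> interval R U" and A': "A' \<in> atoms A T"
  shows "ringprod A' B \<in> atoms (ringprod A B) S"
proof -
  have "A' \<in> interval R T" "A \<subseteq> A'" "minimal_ext A A'"
    using A A' by (auto simp: atoms_def mem_interval_iff)
  then have "minimal_ext (ringprod A B) (ringprod A' B)"
    using minimal_ext_ringprod_left_iff[OF A _ _ B] by blast
  moreover have "ringprod A' B \<in> interval (ringprod A B) S"
    using ringprod_mem_interval[OF \<open>A' \<in> interval R T\<close> B] ringprod_mono[OF \<open>A \<subseteq> A'\<close>, of B B]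
    by (simp add: mem_interval_iff)
  ultimately show ?thesis
    by (simp add: atoms_def)
qed

lemma atoms_ringprod:
  assumes A: "A \<in> interval R T" and B: "B \<in> interval R U"
  shows "atoms (ringprod A B) S
    = (\<lambda>A'. ringprod A' B) ` atoms A T \<union> (\<lambda>B'. ringprod A B') ` atoms B U"
proof (intro equalityI subsetI)
  fix C assume C: "C \<in> atoms (ringprod A B) S"
  then have "C \<in> interval R S" and AB_C: "ringprod A B \<subseteq> C" and min: "minimal_ext (ringprod A B) C"
    using ringprod_mem_interval[OF A B] by (auto simp: atoms_def mem_interval_iff)
  define E F where "E = C \<inter> T" and "F = C \<inter> U"
  have C_EF: "C = ringprod E F"
    unfolding E_def F_def using ringprod_Int_Int[OF \<open>C \<in> interval R S\<close>] by simp
  have E: "E \<in> interval R T" "A \<subseteq> E" and F: "F \<in> interval R U" "B \<subseteq> F"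
    using \<open>C \<in> interval R S\<close> AB_C ringprod_upper1[of A B] ringprod_upper2[of B A] A B
      subring_T subring_U
    by (auto simp: E_def F_def mem_interval_iff subring_Int ringprod_commute)
  have "ringprod E B \<in> interval (ringprod A B) C"
    using ringprod_mono[OF E(2), of B B] ringprod_mono[of E E B F] F(2) C_EF subring_ringprod
    by (simp add: mem_interval_iff)
  then have "ringprod E B = ringprod A B \<or> ringprod E B = C"
    using min by (simp add: minimal_ext_def)
  then show "C \<in> (\<lambda>A'. ringprod A' B) ` atoms A T \<union> (\<lambda>B'. ringprod A B') ` atoms B U"
  proof
    assume "ringprod E B = ringprod A B"
    then have "C = ringprod A F"
      using ringprod_eq_iff[OF E(1) B A B] C_EF by simp
    then have "F \<in> atoms B U"
      using min minimal_ext_ringprod_right_iff[OF A B F] F by (auto simp: atoms_def mem_interval_iff)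
    then show ?thesis
      using \<open>C = ringprod A F\<close> by blast
  next
    assume "ringprod E B = C"
    then have "E \<in> atoms A T"
      using min minimal_ext_ringprod_left_iff[OF A E(1) E(2) B] E by (auto simp: atoms_def mem_interval_iff)
    then show ?thesis
      using \<open>ringprod E B = C\<close> by blast
  qed
next
  fix C assume "C \<in> (\<lambda>A'. ringprod A' B) ` atoms A T \<union> (\<lambda>B'. ringprod A B') ` atoms B U"
  then show "C \<in> atoms (ringprod A B) S"
    using ringprod_mem_atoms_left[OF A B] comaximal_split.ringprod_mem_atoms_left[OF swap B A]
    by (auto simp: ringprod_commute)
qed

lemma socle_ringprod:
  assumes A: "A \<in> interval R T" and B: "B \<in> interval R U"
  shows "socle (ringprod A B) S = ringprod (socle A T) (socle B U)"
proof
  show "socle (ringprod A B) S \<subseteq> ringprod (socle A T) (socle B U)"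
  proof (rule socle_least[OF subring_ringprod])
    show "ringprod A B \<subseteq> ringprod (socle A T) (socle B U)"
      by (intro ringprod_mono socle_upper)
    fix C assume "C \<in> atoms (ringprod A B) S"
    then consider A' where "A' \<in> atoms A T" "C = ringprod A' B"
      | B' where "B' \<in> atoms B U" "C = ringprod A B'"
      unfolding atoms_ringprod[OF A B] by blast
    then show "C \<subseteq> ringprod (socle A T) (socle B U)"
    proof cases
      case 1
      then show ?thesis
        using ringprod_mono[OF atom_subset_socle[OF 1(1)] socle_upper[of B U]] by simp
    next
      case 2
      then show ?thesis
        using ringprod_mono[OF socle_upper[of A T] atom_subset_socle[OF 2(1)]] by simp
    qed
  qed
  have "socle A T \<subseteq> socle (ringprod A B) S"
  proof (rule socle_least[OF subring_socle])
    show "A \<subseteq> socle (ringprod A B) S"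
      using ringprod_upper1 socle_upper by (rule subset_trans)
    fix A' assume A': "A' \<in> atoms A T"
    show "A' \<subseteq> socle (ringprod A B) S"
      using ringprod_upper1 atom_subset_socle[OF ringprod_mem_atoms_left[OF A B A']] by (rule subset_trans)
  qed
  moreover have "socle B U \<subseteq> socle (ringprod B A) S"
  proof (rule socle_least[OF subring_socle])
    show "B \<subseteq> socle (ringprod B A) S"
      using ringprod_upper1 socle_upper by (rule subset_trans)
    fix B' assume B': "B' \<in> atoms B U"
    show "B' \<subseteq> socle (ringprod B A) S"
      using ringprod_upper1 atom_subset_socle[OF comaximal_split.ringprod_mem_atoms_left[OF swap B A B']]
      by (rule subset_trans)
  qed
  ultimately show "ringprod (socle A T) (socle B U) \<subseteq> socle (ringprod A B) S"
    by (intro ringprod_least subring_socle) (simp_all add: ringprod_commute)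
qed

lemma loewy_ringprod: "loewy R S i = ringprod (loewy R T i) (loewy R U i)"
proof (induction i)
  case 0
  show ?case
    using ringprod_absorb1[OF subring_R] by simp
next
  case (Suc i)
  have "loewy R T i \<in> interval R T" "loewy R U i \<in> interval R U"
    using loewy_interval subring_R subring_T subring_U R_subset_T R_subset_U by blast+
  then show ?case
    unfolding loewy_Suc_socle[OF subring_S] loewy_Suc_socle[OF subring_T]
      loewy_Suc_socle[OF subring_U] Suc by (rule socle_ringprod)
qed

lemma loewy_eq_top_iff: "loewy R S k = S \<longleftrightarrow> loewy R T k = T \<and> loewy R U k = U"
proof -
  have "loewy R T k \<in> interval R T" "loewy R U k \<in> interval R U"
    using loewy_interval subring_R subring_T subring_U R_subset_T R_subset_U by blast+
  moreover have "T \<in> interval R T" "U \<in> interval R U"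
    using subring_T subring_U R_subset_T R_subset_U by (simp_all add: mem_interval_iff)
  ultimately show ?thesis
    using ringprod_eq_iff loewy_ringprod compositum by metis
qed

lemma loewy_length_eq_max:
  assumes "FCP R S"
  shows "loewy_length R S = max (loewy_length R T) (loewy_length R U)"
proof -
  have "interval R T \<subseteq> interval R S" "interval R U \<subseteq> interval R S"
    using T_subset_S U_subset_S by (auto simp: interval_def)
  then have "FCP R T" "FCP R U"
    by (simp_all add: FCP_subinterval[OF assms])
  then obtain m n where "loewy R T m = T" "loewy R U n = U"
    using FCP_loewy_reaches_top subring_R subring_T subring_U R_subset_T R_subset_U by metis
  then have "(LEAST k. loewy R T k = T \<and> loewy R U k = U)
      = max (LEAST k. loewy R T k = T) (LEAST k. loewy R U k = U)"
    using Least_conj_upward_closed[where P = "\<lambda>k. loewy R T k = T" and Q = "\<lambda>k. loewy R U k = U"]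
      loewy_eq_top_mono by blast
  then show ?thesis
    unfolding loewy_length_def loewy_eq_top_iff .
qed

lemma complement_subset:
  assumes "V \<in> interval R S" "T \<inter> V = R"
  shows "V \<subseteq> U"
proof -
  have "subring (V \<inter> U)" "R \<subseteq> V \<inter> U"
    using assms subring_U R_subset_U by (auto simp: mem_interval_iff subring_Int)
  then have "ringprod (V \<inter> T) (V \<inter> U) = V \<inter> U"
    using assms(2) by (simp add: Int_commute ringprod_absorb1)
  then show ?thesis
    using ringprod_Int_Int[OF assms(1)] by blast
qed

end

section \<open>Complements\<close>

lemma supp_quot_disjoint_saturation:
  assumes R: "subring R" and S: "subring S" and FCP: "FCP R S" and T: "T \<in> interval R S"
    and disjoint: "supp_quot R T R \<inter> supp_quot R S T = {}"
  shows "\<exists>a\<in>R. \<exists>b\<in>R. a + b = 1 \<and> T \<subseteq> pow_saturation R a \<and> S \<subseteq> pow_saturation T b"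
proof -
  have sT: "subring T" "R \<subseteq> T" "T \<subseteq> S"
    using T by (simp_all add: mem_interval_iff)
  have "R \<in> interval R S" "S \<in> interval T S"
    using R S sT by (auto simp: mem_interval_iff)
  then obtain X Y where X: "finite X" "X \<subseteq> T" "ring_gen (R \<union> X) = T"
    and Y: "finite Y" "Y \<subseteq> S" "ring_gen (T \<union> Y) = S"
    using FCP_finitely_generated[OF FCP S] T by metis
  obtain a b where ab: "a \<in> R" "b \<in> R" "a + b = 1"
    and aX: "\<forall>x\<in>X. a * x \<in> R" and bY: "\<forall>y\<in>Y. b * y \<in> T"
    using supp_quot_disjoint_comaximal_elements[OF R sT(1,2) disjoint X(1,2) Y(1,2)] by blast
  have "X \<subseteq> pow_saturation R a" "Y \<subseteq> pow_saturation T b"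
    using aX bY by (auto intro!: mem_pow_saturationI[where n = 1, simplified])
  moreover have "b \<in> T"
    using ab(2) sT(2) by blast
  ultimately have "ring_gen (R \<union> X) \<subseteq> pow_saturation R a" "ring_gen (T \<union> Y) \<subseteq> pow_saturation T b"
    using subset_pow_saturation[of R a] subset_pow_saturation[of T b]
      ring_gen_least[OF subring_pow_saturation[OF R ab(1)], of "R \<union> X"]
      ring_gen_least[OF subring_pow_saturation[OF sT(1) \<open>b \<in> T\<close>], of "T \<union> Y"]
    by blast+
  with ab show ?thesis
    unfolding X(3) Y(3) by blast
qed

lemma complement_exists:
  assumes R: "subring R" and S: "subring S" and T: "T \<in> interval R S"
    and ab: "a \<in> R" "b \<in> R" "a + b = 1"
    and sat: "T \<subseteq> pow_saturation R a" "S \<subseteq> pow_saturation T b"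
  shows "\<exists>U\<in>interval R S. T \<inter> U = R \<and> ringprod T U = S"
proof (intro bexI conjI)
  define U where "U = S \<inter> pow_saturation R b"
  have sT: "subring T" "R \<subseteq> T" "T \<subseteq> S"
    using T by (simp_all add: mem_interval_iff)
  show U: "U \<in> interval R S"
    unfolding U_def using subring_Int[OF S subring_pow_saturation[OF R ab(2)]]
      subset_pow_saturation[of R b] sT by (auto simp: mem_interval_iff)
  show "T \<inter> U = R"
    using sat(1) pow_saturation_Int_comaximal[OF R ab] sT(2) U by (auto simp: U_def mem_interval_iff)
  show "ringprod T U = S"
  proof
    show "ringprod T U \<subseteq> S"
      using U sT(3) by (intro ringprod_least[OF S]) (auto simp: mem_interval_iff)
    define P where "P = ringprod T U"
    show "S \<subseteq> P"
    proof
      fix y assume y: "y \<in> S"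
      then obtain e where e: "b ^ e * y \<in> T"
        using sat(2) unfolding pow_saturation_def by blast
      then obtain d where d: "a ^ d * (b ^ e * y) \<in> R"
        using sat(1) unfolding pow_saturation_def by blast
      have "a ^ d * y \<in> S"
        using S y ab(1) sT by (auto intro: subring_mult subring_power)
      moreover have "b ^ e * (a ^ d * y) \<in> R"
        using d by (simp add: algebra_simps)
      ultimately have "a ^ d * y \<in> P"
        using ringprod_upper2[of U T] mem_pow_saturationI[of b e]
        unfolding P_def U_def by blast
      moreover have "b ^ e * y \<in> P"
        using e ringprod_upper1[of T U] unfolding P_def by blast
      moreover have "pow_saturation P a \<inter> pow_saturation P b = P"
        using ab sT(2) ringprod_upper1[of T U] unfolding P_def
        by (intro pow_saturation_Int_comaximal subring_ringprod) auto
      ultimately show "y \<in> P"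
        using mem_pow_saturationI by blast
    qed
  qed
qed

lemma complement_comaximal_split:
  assumes R: "subring R" and T: "T \<in> interval R S" and ab: "a \<in> R" "b \<in> R" "a + b = 1"
    and sat: "T \<subseteq> pow_saturation R a" "S \<subseteq> pow_saturation T b"
    and U: "U \<in> interval R S" "T \<inter> U = R" "ringprod T U = S"
  shows "comaximal_split R T U S a b"
proof
  have sU: "subring U" "R \<subseteq> U" "U \<subseteq> S"
    using U(1) by (simp_all add: mem_interval_iff)
  then have "U \<subseteq> pow_saturation (U \<inter> T) b"
    using Int_pow_saturation_subset[OF sU(1), of b T] sat(2) ab(2) by blast
  then show "U \<subseteq> pow_saturation R b"
    using U(2) by (simp add: Int_commute)
qed (use assms in \<open>simp_all add: mem_interval_iff\<close>)

lemma ex1_complement: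
  assumes R: "subring R" and S: "subring S" and T: "T \<in> interval R S"
    and ab: "a \<in> R" "b \<in> R" "a + b = 1"
    and sat: "T \<subseteq> pow_saturation R a" "S \<subseteq> pow_saturation T b"
  shows "\<exists>!U. U \<in> interval R S \<and> T \<inter> U = R \<and> ringprod T U = S"
proof -
  obtain U where U: "U \<in> interval R S" "T \<inter> U = R" "ringprod T U = S"
    using complement_exists[OF R S T ab sat] by blast
  show ?thesis
  proof (rule ex1I[of _ U])
    show "U \<in> interval R S \<and> T \<inter> U = R \<and> ringprod T U = S"
      using U by blast
    fix V assume "V \<in> interval R S \<and> T \<inter> V = R \<and> ringprod T V = S"
    then have V: "V \<in> interval R S" "T \<inter> V = R" "ringprod T V = S"
      by simp_all
    show "V = U"
      using comaximal_split.complement_subset[OF complement_comaximal_split[OF R T ab sat U] V(1,2)]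
        comaximal_split.complement_subset[OF complement_comaximal_split[OF R T ab sat V] U(1,2)]
      by (rule subset_antisym)
  qed
qed

theorem proposition8p12:
  fixes R S T :: "'a::comm_ring_1 set"
  assumes "subring R" and "subring S" and "R \<subset> S"
    and "FCP R S"
    and "T \<in> interval R S" and "T \<noteq> R" and "T \<noteq> S"
    and "supp_quot R T R \<inter> supp_quot R S T = {}"
  shows "(\<exists>!U. U \<in> interval R S \<and> T \<inter> U = R \<and> ringprod T U = S)
       \<and> (\<forall>U. U \<in> interval R S \<and> T \<inter> U = R \<and> ringprod T U = S \<longrightarrow>
             (\<forall>i \<le> loewy_length R S. loewy R S i = ringprod (loewy R T i) (loewy R U i))
           \<and> loewy_length R S = max (loewy_length R T) (loewy_length R U))"
proof -
  obtain a b where ab: "a \<in> R" "b \<in> R" "a + b = 1"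
    and sat: "T \<subseteq> pow_saturation R a" "S \<subseteq> pow_saturation T b"
    using supp_quot_disjoint_saturation[OF assms(1,2,4,5,8)] by blast
  have "\<exists>!U. U \<in> interval R S \<and> T \<inter> U = R \<and> ringprod T U = S"
    by (rule ex1_complement[OF assms(1,2,5) ab sat])
  moreover have "(\<forall>i. loewy R S i = ringprod (loewy R T i) (loewy R V i))
      \<and> loewy_length R S = max (loewy_length R T) (loewy_length R V)"
    if "V \<in> interval R S" "T \<inter> V = R" "ringprod T V = S" for V
    using comaximal_split.loewy_ringprod[OF complement_comaximal_split[OF assms(1,5) ab sat that]]
      comaximal_split.loewy_length_eq_max[OF complement_comaximal_split[OF assms(1,5) ab sat that] assms(4)]
    by blast
  ultimately show ?thesis
    by blast
qed

end
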